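(* Let $A$ be an infinite discrete abelian group of uniform torsion, i.e. $dA=0$ for some integer $d\ge1$. Then $\mathcal{S}(\mathbf{R}\times A)$ is not path-connected.
   Context: $\mathcal{S}(G)$ denotes the space of closed subgroups of the locally compact group $G$ with the Chabauty topology (basic open sets $\{F: F\cap K=\emptyset,\ F\cap U_i\ne\emptyset\ \forall i\}$, $K$ compact, $U_i$ open). *)

theory Defs
  imports "HOL-Analysis.Analysis" "HOL-Library.Product_Plus"
begin

primrec nsmul :: "nat \<Rightarrow> 'a::monoid_add \<Rightarrow> 'a" where
  "nsmul 0 x = 0"
| "nsmul (Suc n) x = x + nsmul n x"

text \<open>Closed subgroups of an abelian group type whose topology is X (topspace X = UNIV).\<close>
definition closed_subgroups :: "'g::ab_group_add topology \<Rightarrow> 'g set set" where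
  "closed_subgroups X = {H. closedin X H \<and> 0 \<in> H \<and> (\<forall>x\<in>H. \<forall>y\<in>H. x - y \<in> H)}"

text \<open>Chabauty topology on a family C of subsets of the space X: generated by the
  subbasic sets {F. F \<inter> K = {}} (K compact) and {F. F \<inter> U \<noteq> {}} (U open),
  restricted to C. Finite intersections of these are exactly the paper's basic open sets.\<close>
definition chabauty :: "'a topology \<Rightarrow> 'a set set \<Rightarrow> 'a set topology" where
  "chabauty X C = subtopology
     (topology_generated_by
        ({{F. F \<inter> K = {}} | K. compactin X K} \<union> {{F. F \<inter> U \<noteq> {}} | U. openin X U}))
     C"

end

theory Submission
  imports Defs
begin

text \<open>
  The invariant "the projection of H to A is finite" distinguishes the
  trivial subgroup {0} x {0} from {0} x A (A infinite); we show it is constant along paths.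

  Locally the invariant is controlled by clopen conditions. If H contains a small positive
  axis element, the projection of H is seen inside the strip [0,1) x A, so membership of a
  in the projection is open and closed nearby. Otherwise H misses an axis segment
  [s, (d+1)s]; by torsion all nonzero real coordinates in H then have size >= s, membership
  of (0, a) is open and closed nearby, and finiteness of the projection reduces to finiteness
  of the fibre over 0. A path is locally confined to such a neighbourhood on a connected
  interval, where all these clopen conditions are constant.
\<close>

lemma nsmul_Pair: "nsmul n (r::real, a::'a::monoid_add) = (real n * r, nsmul n a)"
  by (induction n) (auto simp: algebra_simps zero_prod_def)

lemma closed_subgroup_zero: "H \<in> closed_subgroups X \<Longrightarrow> 0 \<in> H"
  and closed_subgroup_diff: "H \<in> closed_subgroups X \<Longrightarrow> x \<in> H \<Longrightarrow> y \<in> H \<Longrightarrow> x - y \<in> H"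
  by (auto simp: closed_subgroups_def)

lemma closed_subgroup_minus: "H \<in> closed_subgroups X \<Longrightarrow> x \<in> H \<Longrightarrow> - x \<in> H"
  by (metis closed_subgroup_zero closed_subgroup_diff diff_0)

lemma closed_subgroup_add: "H \<in> closed_subgroups X \<Longrightarrow> x \<in> H \<Longrightarrow> y \<in> H \<Longrightarrow> x + y \<in> H"
  by (metis closed_subgroup_diff closed_subgroup_minus diff_minus_eq_add)

lemma closed_subgroup_nsmul: "H \<in> closed_subgroups X \<Longrightarrow> x \<in> H \<Longrightarrow> nsmul n x \<in> H"
  by (induction n) (auto simp: closed_subgroup_zero closed_subgroup_add)

lemma closed_subgroup_int_multiple:
  fixes H :: "(real \<times> 'a::ab_group_add) set"
  assumes H: "H \<in> closed_subgroups X" and q: "(q, 0) \<in> H"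
  shows "(of_int k * q, 0) \<in> H"
proof -
  have nat_mult: "(real n * q, 0) \<in> H" for n
  proof (induction n)
    case 0 show ?case using closed_subgroup_zero[OF H] by (simp add: zero_prod_def)
  next
    case (Suc n)
    have "(q, 0) + (real n * q, 0) \<in> H" using closed_subgroup_add[OF H q Suc] .
    then show ?case by (simp add: algebra_simps)
  qed
  show ?thesis
  proof (cases "k \<ge> 0")
    case True then show ?thesis using nat_mult[of "nat k"] by simp
  next
    case False
    have "- (real (nat (- k)) * q, 0::'a) \<in> H" using closed_subgroup_minus[OF H nat_mult] .
    then show ?thesis using False by simp
  qed
qed

lemma int_multiple_in_interval:
  fixes q x :: real
  assumes "q > 0"
  shows "\<exists>k::int. x < of_int k * q \<and> of_int k * q \<le> x + q"
proof (intro exI conjI)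
  let ?k = "\<lfloor>x / q\<rfloor> + 1"
  have "x / q < of_int ?k" "of_int ?k \<le> x / q + 1" by linarith+
  then show "x < of_int ?k * q" "of_int ?k * q \<le> x + q"
    using assms by (simp_all add: field_simps)
qed

lemma closed_subgroup_reduce_mod:
  fixes H :: "(real \<times> 'a::ab_group_add) set"
  assumes H: "H \<in> closed_subgroups X" and q: "(q, 0) \<in> H" "q > 0" and ra: "(r, a) \<in> H"
  shows "\<exists>r'. 0 \<le> r' \<and> r' < q \<and> (r', a) \<in> H"
proof -
  obtain k :: int where k: "r - q < of_int k * q" "of_int k * q \<le> r"
    using int_multiple_in_interval[OF q(2), of "r - q"] by auto
  have "(r, a) - (of_int k * q, 0) \<in> H"
    using closed_subgroup_diff[OF H ra closed_subgroup_int_multiple[OF H q(1)]] .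
  then show ?thesis using k by (intro exI[of _ "r - of_int k * q"]) simp
qed

(* Since d kills A, the d-th multiple of any (r, a) in H lies on the real axis. *)
lemma closed_subgroup_torsion_axis:
  fixes H :: "(real \<times> 'a::ab_group_add) set"
  assumes H: "H \<in> closed_subgroups X" and tor: "\<forall>x::'a. nsmul d x = 0" and ra: "(r, a) \<in> H"
  shows "(real d * \<bar>r\<bar>, 0) \<in> H"
proof -
  have dr: "(real d * r, 0) \<in> H"
    using closed_subgroup_nsmul[OF H ra, of d] tor by (simp add: nsmul_Pair)
  show ?thesis
  proof (cases "r \<ge> 0")
    case True then show ?thesis using dr by simp
  next
    case False
    have "- (real d * r, 0::'a) \<in> H" using closed_subgroup_minus[OF H dr] .
    then show ?thesis using False by simp
  qed
qed

(* If H misses the axis segment [s, (d+1)s], then every element of H with nonzero real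
   coordinate has |r| >= s: otherwise d|r| is a short positive axis element, and one of
   its multiples would land in the segment. *)
lemma closed_subgroup_gap_separated:
  fixes H :: "(real \<times> 'a::ab_group_add) set"
  assumes H: "H \<in> closed_subgroups X" and d: "d \<ge> 1" and tor: "\<forall>x::'a. nsmul d x = 0"
    and s: "s > 0" and gap: "H \<inter> ({s..(real d + 1) * s} \<times> {0}) = {}"
    and ra: "(r, a) \<in> H" and r: "r \<noteq> 0"
  shows "s \<le> \<bar>r\<bar>"
proof (rule ccontr)
  assume "\<not> s \<le> \<bar>r\<bar>"
  define q where "q = real d * \<bar>r\<bar>"
  have q: "0 < q" "q < real d * s"
    using d r \<open>\<not> s \<le> \<bar>r\<bar>\<close> unfolding q_def by auto
  obtain k :: int where k: "s < of_int k * q" "of_int k * q \<le> s + q"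
    using int_multiple_in_interval[OF q(1)] by blast
  have "(of_int k * q, 0) \<in> H"
    using closed_subgroup_int_multiple[OF H closed_subgroup_torsion_axis[OF H tor ra]]
    unfolding q_def .
  moreover have "of_int k * q \<in> {s..(real d + 1) * s}"
    using k q by (simp add: algebra_simps)
  ultimately show False using gap by blast
qed

lemma separated_bounded_reals_finite:
  fixes R :: "real set"
  assumes s: "s > 0" and R: "R \<subseteq> {0..p}"
    and sep: "\<And>x y. x \<in> R \<Longrightarrow> y \<in> R \<Longrightarrow> x \<noteq> y \<Longrightarrow> s \<le> \<bar>x - y\<bar>"
  shows "finite R"
proof -
  have inj: "inj_on (\<lambda>x. \<lfloor>x / s\<rfloor>) R"
  proof (rule inj_onI, rule ccontr)
    fix x y assume xy: "x \<in> R" "y \<in> R" "\<lfloor>x / s\<rfloor> = \<lfloor>y / s\<rfloor>" "x \<noteq> y"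
    have "\<bar>x / s - y / s\<bar> < 1" using xy(3) by linarith
    then have "\<bar>x - y\<bar> < s" using s by (simp add: field_simps abs_divide[symmetric] diff_divide_distrib[symmetric])
    then show False using sep[OF xy(1,2,4)] by simp
  qed
  have range: "(\<lambda>x. \<lfloor>x / s\<rfloor>) ` R \<subseteq> {0..\<lfloor>p / s\<rfloor>}"
  proof
    fix z assume "z \<in> (\<lambda>x. \<lfloor>x / s\<rfloor>) ` R"
    then obtain x where x: "x \<in> R" "z = \<lfloor>x / s\<rfloor>" by blast
    then have x_bounds: "0 \<le> x" "x \<le> p" using R by auto
    have "0 \<le> \<lfloor>x / s\<rfloor>" using x_bounds(1) s by simp
    moreover have "\<lfloor>x / s\<rfloor> \<le> \<lfloor>p / s\<rfloor>"
      using x_bounds(2) s by (intro floor_mono divide_right_mono) simp_all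
    ultimately show "z \<in> {0..\<lfloor>p / s\<rfloor>}" using x(2) by simp
  qed
  show ?thesis using finite_imageD[OF finite_subset[OF range] inj] by simp
qed

(* Each row {a. (r, a) in H} is empty or a translate of the fibre over 0. *)
lemma closed_subgroup_row_finite:
  fixes H :: "(real \<times> 'a::ab_group_add) set"
  assumes H: "H \<in> closed_subgroups X" and fin: "finite {a. (0, a) \<in> H}"
  shows "finite {a. (r, a) \<in> H}"
proof (cases "\<exists>a0. (r, a0) \<in> H")
  case True
  then obtain a0 where a0: "(r, a0) \<in> H" by blast
  have "{a. (r, a) \<in> H} \<subseteq> (\<lambda>b. a0 + b) ` {b. (0, b) \<in> H}"
  proof
    fix a assume "a \<in> {a. (r, a) \<in> H}"
    then have "(r, a) - (r, a0) \<in> H" using closed_subgroup_diff[OF H _ a0] by blast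
    then show "a \<in> (\<lambda>b. a0 + b) ` {b. (0, b) \<in> H}" by (intro image_eqI[of _ _ "a - a0"]) auto
  qed
  then show ?thesis using finite_subset fin by auto
qed simp

(* For an s-separated subgroup, finiteness of the projection to A is decided by the
   fibre over 0: reducing the real coordinate modulo a positive axis element leaves
   finitely many rows to consider, each a translate of that fibre. *)
lemma closed_subgroup_finite_projection:
  fixes H :: "(real \<times> 'a::ab_group_add) set"
  assumes H: "H \<in> closed_subgroups X" and d: "d \<ge> 1" and tor: "\<forall>x::'a. nsmul d x = 0"
    and s: "s > 0" and sep: "\<And>r a. (r, a) \<in> H \<Longrightarrow> r \<noteq> 0 \<Longrightarrow> s \<le> \<bar>r\<bar>"
    and fin: "finite {a. (0, a) \<in> H}"
  shows "finite (snd ` H)"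
proof (cases "\<exists>r0 a0. (r0, a0) \<in> H \<and> r0 \<noteq> 0")
  case False
  then have "snd ` H \<subseteq> {a. (0, a) \<in> H}" by force
  then show ?thesis using finite_subset fin by auto
next
  case True
  then obtain r0 a0 where ra0: "(r0, a0) \<in> H" "r0 \<noteq> 0" by blast
  define p where "p = real d * \<bar>r0\<bar>"
  have p: "(p, 0) \<in> H" "p > 0"
    using closed_subgroup_torsion_axis[OF H tor ra0(1)] d ra0(2) unfolding p_def by auto
  define R where "R = {r. 0 \<le> r \<and> r < p \<and> (\<exists>a. (r, a) \<in> H)}"
  have finR: "finite R"
  proof (rule separated_bounded_reals_finite[OF s])
    show "R \<subseteq> {0..p}" unfolding R_def by auto
    fix x y assume "x \<in> R" "y \<in> R" "x \<noteq> y"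
    then obtain ax ay where "(x, ax) \<in> H" "(y, ay) \<in> H" unfolding R_def by blast
    then have "(x, ax) - (y, ay) \<in> H" by (rule closed_subgroup_diff[OF H])
    then show "s \<le> \<bar>x - y\<bar>" using sep \<open>x \<noteq> y\<close> by fastforce
  qed
  have cover: "snd ` H \<subseteq> (\<Union>r\<in>R. {a. (r, a) \<in> H})"
  proof
    fix a assume "a \<in> snd ` H"
    then obtain r where "(r, a) \<in> H" by force
    then obtain r' where "0 \<le> r'" "r' < p" "(r', a) \<in> H"
      using closed_subgroup_reduce_mod[OF H p] by blast
    then show "a \<in> (\<Union>r\<in>R. {a. (r, a) \<in> H})" unfolding R_def by blast
  qed
  have "finite (\<Union>r\<in>R. {a. (r, a) \<in> H})"
    using finR closed_subgroup_row_finite[OF H fin] by simp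
  then show ?thesis using cover finite_subset by auto
qed

definition slicewise_clopen :: "'b topology \<Rightarrow> 'b set \<Rightarrow> ('b \<Rightarrow> 'c \<Rightarrow> bool) \<Rightarrow> bool" where
  "slicewise_clopen Y V Q \<longleftrightarrow> openin Y V \<and>
     (\<forall>a. openin (subtopology Y V) {y \<in> V. Q y a} \<and> closedin (subtopology Y V) {y \<in> V. Q y a})"

lemma slicewise_clopenI:
  assumes V: "openin Y V"
    and U: "\<And>a. openin Y (U a)" and U_trace: "\<And>y a. y \<in> V \<Longrightarrow> y \<in> U a \<longleftrightarrow> Q y a"
    and W: "\<And>a. openin Y (W a)" and W_trace: "\<And>y a. y \<in> V \<Longrightarrow> y \<in> W a \<longleftrightarrow> \<not> Q y a"
  shows "slicewise_clopen Y V Q"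
  unfolding slicewise_clopen_def
proof (intro allI conjI)
  show "openin Y V" by (fact V)
next
  fix a
  have "{y \<in> V. Q y a} = U a \<inter> V" "V - {y \<in> V. Q y a} = W a \<inter> V"
    using U_trace W_trace by auto
  moreover have "topspace (subtopology Y V) = V" using V openin_subset by fastforce
  ultimately show "openin (subtopology Y V) {y \<in> V. Q y a}"
    and "closedin (subtopology Y V) {y \<in> V. Q y a}"
    using U[of a] W[of a] V by (auto simp: closedin_def openin_open_subtopology)
qed

(* On a connected subset of V no slice can be split, so Q y a does not depend on y. *)
lemma slicewise_clopen_constant_on_connected:
  assumes "slicewise_clopen Y V Q" and "connectedin Y C" "C \<subseteq> V" and "y \<in> C" "y' \<in> C"
  shows "Q y a \<longleftrightarrow> Q y' a"
proof -
  have "connectedin (subtopology Y V) C" using assms(2,3) by (simp add: connectedin_subtopology)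
  moreover have "closedin (subtopology Y V) {y \<in> V. Q y a}" "openin (subtopology Y V) {y \<in> V. Q y a}"
    using assms(1) unfolding slicewise_clopen_def by blast+
  ultimately have "C \<subseteq> {y \<in> V. Q y a} \<or> disjnt C {y \<in> V. Q y a}"
    by (rule connectedin_clopen_cases)
  then show ?thesis using assms(3-5) by (auto simp: disjnt_iff)
qed

(* An invariant phi which, near every point, depends only on the slices of some
   slicewise clopen family is constant along paths: locally around each time the path
   stays in V on a connected interval, where all slices are constant. *)
lemma locally_determined_invariant_along_paths:
  assumes g: "pathin Y g"
    and local: "\<And>y. y \<in> topspace Y \<Longrightarrow> \<exists>V Q. y \<in> V \<and> slicewise_clopen Y V Q \<and>
                  (\<forall>y'\<in>V. \<forall>y''\<in>V. (\<forall>a. Q y' a = Q y'' a) \<longrightarrow> \<phi> y' = \<phi> y'')"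
  shows "\<phi> (g 0) = \<phi> (g 1)"
proof (rule connected_equivalence_relation[where S = "{0..1}" and R = "\<lambda>t t'. \<phi> (g t) = \<phi> (g t')"])
  fix t0 :: real assume t0: "t0 \<in> {0..1}"
  have gc: "continuous_map (top_of_set {0..1}) Y g" using g by (simp add: pathin_def)
  then have "g t0 \<in> topspace Y" using t0 by (auto simp: continuous_map_def)
  then obtain V :: "'a set" and Q :: "'a \<Rightarrow> 'b \<Rightarrow> bool" where V: "g t0 \<in> V" and Q: "slicewise_clopen Y V Q"
    and \<phi>: "\<forall>y'\<in>V. \<forall>y''\<in>V. (\<forall>a. Q y' a = Q y'' a) \<longrightarrow> \<phi> y' = \<phi> y''"
    using local by blast
  have "openin Y V" using Q unfolding slicewise_clopen_def by blast
  then have "openin (top_of_set {0..1}) {t \<in> topspace (top_of_set {0..1}). g t \<in> V}"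
    by (rule openin_continuous_map_preimage[OF gc])
  then have "openin (top_of_set {0..1}) {t \<in> {0..1}. g t \<in> V}" by simp
  then obtain e where e: "e > 0" "ball t0 e \<inter> {0..1} \<subseteq> {t \<in> {0..1}. g t \<in> V}"
    using t0 V unfolding openin_contains_ball by blast
  define J where "J = {0..1} \<inter> ball t0 e"
  have "connected J"
    unfolding J_def by (intro convex_connected convex_Int convex_ball) (simp add: is_interval_convex)
  then have "connectedin (top_of_set {0..1}) J" by (simp add: connectedin_subtopology J_def)
  then have conn: "connectedin Y (g ` J)" by (rule connectedin_continuous_map_image[OF gc])
  have JV: "g ` J \<subseteq> V" using e(2) unfolding J_def by blast
  have t0J: "t0 \<in> J" using t0 e(1) unfolding J_def by simp
  have "\<phi> (g t0) = \<phi> (g t)" if "t \<in> J" for t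
  proof -
    have "\<forall>a. Q (g t0) a = Q (g t) a"
      using slicewise_clopen_constant_on_connected[OF Q conn JV] that t0J by blast
    then show ?thesis using \<phi> JV that t0J by blast
  qed
  moreover have "openin (top_of_set {0..1}) J" unfolding J_def by blast
  ultimately show "\<exists>T. openin (top_of_set {0..1}) T \<and> t0 \<in> T \<and> (\<forall>t\<in>T. \<phi> (g t0) = \<phi> (g t))"
    using t0J by blast
qed auto

lemma chabauty_topspace: "topspace (chabauty X C) = C"
proof -
  have "UNIV \<in> {{F. F \<inter> K = {}} | K. compactin X K}"
    by (rule CollectI, rule exI[of _ "{}"]) auto
  then show ?thesis unfolding chabauty_def by auto
qed

lemma chabauty_miss_open: "compactin X K \<Longrightarrow> openin (chabauty X C) {F \<in> C. F \<inter> K = {}}"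
  unfolding chabauty_def openin_subtopology
  by (rule exI[of _ "{F. F \<inter> K = {}}"]) (auto intro!: topology_generated_by_Basis)

lemma chabauty_hit_open: "openin X U \<Longrightarrow> openin (chabauty X C) {F \<in> C. F \<inter> U \<noteq> {}}"
  unfolding chabauty_def openin_subtopology
  by (rule exI[of _ "{F. F \<inter> U \<noteq> {}}"]) (auto intro!: topology_generated_by_Basis)

abbreviation line_times_discrete :: "(real \<times> 'a) topology" where
  "line_times_discrete \<equiv> prod_topology euclideanreal (discrete_topology UNIV)"

abbreviation chabauty_space :: "(real \<times> 'a::ab_group_add) set topology" where
  "chabauty_space \<equiv> chabauty line_times_discrete (closed_subgroups line_times_discrete)"

lemma closed_subgroup_projection_near_axis:
  fixes H :: "(real \<times> 'a::ab_group_add) set"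
  assumes H: "H \<in> closed_subgroups X" and near: "H \<inter> ({0<..<1} \<times> {0}) \<noteq> {}"
  shows "a \<in> snd ` H \<longleftrightarrow> (\<exists>r. 0 \<le> r \<and> r < 1 \<and> (r, a) \<in> H)"
proof
  assume "a \<in> snd ` H"
  then obtain r where ra: "(r, a) \<in> H" by force
  obtain e where e: "(e, 0) \<in> H" "0 < e" "e < 1" using near by auto
  show "\<exists>r. 0 \<le> r \<and> r < 1 \<and> (r, a) \<in> H"
    using closed_subgroup_reduce_mod[OF H e(1,2) ra] e(3) by force
qed force

lemma chabauty_projection_clopen_near_axis:
  defines "V \<equiv> {F \<in> closed_subgroups (line_times_discrete :: (real \<times> 'a::ab_group_add) topology).
                 F \<inter> ({0<..<1} \<times> {0}) \<noteq> {}}"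
  shows "slicewise_clopen chabauty_space V (\<lambda>F a. a \<in> snd ` F)"
proof (rule slicewise_clopenI
    [where U = "\<lambda>a. {F \<in> closed_subgroups line_times_discrete. F \<inter> ({-1<..<1} \<times> {a}) \<noteq> {}}"
       and W = "\<lambda>a. {F \<in> closed_subgroups line_times_discrete. F \<inter> ({0..1} \<times> {a}) = {}}"])
  show "openin chabauty_space V"
    unfolding V_def by (rule chabauty_hit_open) (simp add: openin_prod_Times_iff)
  show "openin chabauty_space {F \<in> closed_subgroups line_times_discrete. F \<inter> ({-1<..<1} \<times> {a}) \<noteq> {}}"
    for a :: 'a by (rule chabauty_hit_open) (simp add: openin_prod_Times_iff)
  show "openin chabauty_space {F \<in> closed_subgroups line_times_discrete. F \<inter> ({0..1} \<times> {a}) = {}}"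
    for a :: 'a by (rule chabauty_miss_open) (simp add: compactin_Times finite_imp_compactin)
  fix F a assume "F \<in> V"
  then have F: "F \<in> closed_subgroups line_times_discrete" "F \<inter> ({0<..<1} \<times> {0}) \<noteq> {}"
    unfolding V_def by auto
  note strip = closed_subgroup_projection_near_axis[OF F, of a]
  show "F \<in> {F \<in> closed_subgroups line_times_discrete. F \<inter> ({-1<..<1} \<times> {a}) \<noteq> {}} \<longleftrightarrow> a \<in> snd ` F"
  proof
    assume "F \<in> {F \<in> closed_subgroups line_times_discrete. F \<inter> ({-1<..<1} \<times> {a}) \<noteq> {}}"
    then obtain r where "(r, a) \<in> F" by auto
    then show "a \<in> snd ` F" by (rule rev_image_eqI) simp
  next
    assume "a \<in> snd ` F"
    then obtain r where "0 \<le> r" "r < 1" "(r, a) \<in> F" using strip by blast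
    then show "F \<in> {F \<in> closed_subgroups line_times_discrete. F \<inter> ({-1<..<1} \<times> {a}) \<noteq> {}}"
      using F(1) by auto
  qed
  show "F \<in> {F \<in> closed_subgroups line_times_discrete. F \<inter> ({0..1} \<times> {a}) = {}} \<longleftrightarrow> a \<notin> snd ` F"
  proof
    assume "F \<in> {F \<in> closed_subgroups line_times_discrete. F \<inter> ({0..1} \<times> {a}) = {}}"
    then show "a \<notin> snd ` F" using strip by auto
  next
    assume "a \<notin> snd ` F"
    then have "F \<inter> ({0..1} \<times> {a}) = {}" by (auto intro: rev_image_eqI)
    then show "F \<in> {F \<in> closed_subgroups line_times_discrete. F \<inter> ({0..1} \<times> {a}) = {}}"
      using F(1) by simp
  qed
qed

(* Among subgroups missing [s, (d+1)s] x {0}, which are s-separated, "(0, a) in H" is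
   clopen: it means hitting (-s,s) x {a}, and its negation means missing {(0, a)}. *)
lemma chabauty_fibre_clopen_off_axis:
  fixes s :: real
  assumes d: "d \<ge> 1" and tor: "\<forall>x::'a::ab_group_add. nsmul d x = 0" and s: "s > 0"
  defines "V \<equiv> {F \<in> closed_subgroups (line_times_discrete :: (real \<times> 'a) topology).
                 F \<inter> ({s..(real d + 1) * s} \<times> {0}) = {}}"
  shows "slicewise_clopen chabauty_space V (\<lambda>F a. (0, a) \<in> F)"
proof (rule slicewise_clopenI
    [where U = "\<lambda>a. {F \<in> closed_subgroups line_times_discrete. F \<inter> ({-s<..<s} \<times> {a}) \<noteq> {}}"
       and W = "\<lambda>a. {F \<in> closed_subgroups line_times_discrete. F \<inter> {(0, a)} = {}}"])
  show "openin chabauty_space V"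
    unfolding V_def by (rule chabauty_miss_open) (simp add: compactin_Times finite_imp_compactin)
  show "openin chabauty_space {F \<in> closed_subgroups line_times_discrete. F \<inter> ({-s<..<s} \<times> {a}) \<noteq> {}}"
    for a :: 'a by (rule chabauty_hit_open) (simp add: openin_prod_Times_iff)
  show "openin chabauty_space {F \<in> closed_subgroups line_times_discrete. F \<inter> {(0, a)} = {}}"
    for a :: 'a by (rule chabauty_miss_open) (simp add: finite_imp_compactin)
  fix F a assume "F \<in> V"
  then have F: "F \<in> closed_subgroups line_times_discrete" "F \<inter> ({s..(real d + 1) * s} \<times> {0}) = {}"
    unfolding V_def by auto
  show "F \<in> {F \<in> closed_subgroups line_times_discrete. F \<inter> ({-s<..<s} \<times> {a}) \<noteq> {}} \<longleftrightarrow> (0, a) \<in> F"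
  proof
    assume "F \<in> {F \<in> closed_subgroups line_times_discrete. F \<inter> ({-s<..<s} \<times> {a}) \<noteq> {}}"
    then obtain r where r: "(r, a) \<in> F" "-s < r" "r < s" by auto
    then have "\<bar>r\<bar> < s" by (simp add: abs_less_iff)
    with r(1) have "r = 0" using closed_subgroup_gap_separated[OF F(1) d tor s F(2)] by force
    then show "(0, a) \<in> F" using r by simp
  next
    assume "(0, a) \<in> F"
    then show "F \<in> {F \<in> closed_subgroups line_times_discrete. F \<inter> ({-s<..<s} \<times> {a}) \<noteq> {}}"
      using F(1) s by auto
  qed
  show "F \<in> {F \<in> closed_subgroups line_times_discrete. F \<inter> {(0, a)} = {}} \<longleftrightarrow> (0, a) \<notin> F"
    using F(1) by auto
qed

(* Either H hits (0,1) x {0} and the family is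
   the projection itself, or H misses it, hence misses [s, (d+1)s] x {0} for
   s = 1/(d+2), and the family is the fibre over 0. *)
lemma chabauty_finite_projection_locally_determined:
  assumes d: "d \<ge> 1" and tor: "\<forall>x::'a::ab_group_add. nsmul d x = 0"
    and H: "H \<in> closed_subgroups (line_times_discrete :: (real \<times> 'a) topology)"
  shows "\<exists>V Q. H \<in> V \<and> slicewise_clopen chabauty_space V Q \<and>
           (\<forall>H'\<in>V. \<forall>H''\<in>V. (\<forall>a::'a. Q H' a = Q H'' a) \<longrightarrow> finite (snd ` H') = finite (snd ` H''))"
proof (cases "H \<inter> ({0<..<1} \<times> {0}) \<noteq> {}")
  case True
  let ?V = "{F \<in> closed_subgroups (line_times_discrete :: (real \<times> 'a) topology).
              F \<inter> ({0<..<1} \<times> {0}) \<noteq> {}}"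
  show ?thesis
  proof (intro exI[of _ ?V] exI[of _ "\<lambda>F a. a \<in> snd ` F"] conjI ballI impI)
    show "H \<in> ?V" using H True by blast
    show "slicewise_clopen chabauty_space ?V (\<lambda>F a. a \<in> snd ` F)"
      by (rule chabauty_projection_clopen_near_axis)
    fix H' H'' :: "(real \<times> 'a) set" assume "\<forall>a. a \<in> snd ` H' \<longleftrightarrow> a \<in> snd ` H''"
    then have "snd ` H' = snd ` H''" by blast
    then show "finite (snd ` H') = finite (snd ` H'')" by simp
  qed
next
  case False
  define s :: real where "s = 1 / (real d + 2)"
  have s: "s > 0" "(real d + 1) * s < 1" unfolding s_def by (simp_all add: field_simps)
  let ?V = "{F \<in> closed_subgroups (line_times_discrete :: (real \<times> 'a) topology).
              F \<inter> ({s..(real d + 1) * s} \<times> {0}) = {}}"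
  have sep: "s \<le> \<bar>r\<bar>" if "F \<in> ?V" "(r, a) \<in> F" "r \<noteq> 0" for F r a
    using closed_subgroup_gap_separated[OF _ d tor s(1) _ that(2,3)] that(1) by blast
  have fin: "finite (snd ` F) \<longleftrightarrow> finite {a. (0, a) \<in> F}" if "F \<in> ?V" for F
  proof
    assume "finite (snd ` F)"
    moreover have "{a. (0, a) \<in> F} \<subseteq> snd ` F" by force
    ultimately show "finite {a. (0, a) \<in> F}" using finite_subset by blast
  next
    assume "finite {a. (0, a) \<in> F}"
    then show "finite (snd ` F)"
      using closed_subgroup_finite_projection[OF _ d tor s(1)] sep[OF that] that by blast
  qed
  have "{s..(real d + 1) * s} \<subseteq> {0<..<1}" using s by auto
  then have "H \<in> ?V" using H False by blast
  then show ?thesis using chabauty_fibre_clopen_off_axis[OF d tor s(1)] fin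
    by (intro exI[of _ ?V] exI[of _ "\<lambda>F a. (0, a) \<in> F"]) auto
qed

lemma vertical_closed_subgroup:
  fixes B :: "'a::ab_group_add set"
  assumes "0 \<in> B" and "\<forall>x\<in>B. \<forall>y\<in>B. x - y \<in> B"
  shows "{0} \<times> B \<in> closed_subgroups (line_times_discrete :: (real \<times> 'a) topology)"
proof -
  have "closedin (line_times_discrete :: (real \<times> 'a) topology) ({0} \<times> B)"
    by (simp add: closedin_prod_Times_iff)
  then show ?thesis using assms by (auto simp: closed_subgroups_def zero_prod_def)
qed

theorem proposition7p6:
  fixes d :: nat
  assumes "d \<ge> 1"
    and "\<forall>x::'a::ab_group_add. nsmul d x = 0"
    and "infinite (UNIV :: 'a set)"
  shows "\<not> path_connected_space
           (chabauty (prod_topology euclideanreal (discrete_topology (UNIV :: 'a set)))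
                     (closed_subgroups (prod_topology euclideanreal (discrete_topology (UNIV :: 'a set)))))"
proof
  assume path_connected: "path_connected_space (chabauty_space :: (real \<times> 'a) set topology)"
  have "{0} \<times> {0} \<in> topspace (chabauty_space :: (real \<times> 'a) set topology)"
    and "{0} \<times> UNIV \<in> topspace (chabauty_space :: (real \<times> 'a) set topology)"
    unfolding chabauty_topspace by (rule vertical_closed_subgroup; simp)+
  then obtain g where g: "pathin chabauty_space g" "g 0 = {0} \<times> {0 :: 'a}" "g 1 = {0} \<times> (UNIV :: 'a set)"
    using path_connected unfolding path_connected_space_def by blast
  have "finite (snd ` g 0) = finite (snd ` g 1)"
    by (rule locally_determined_invariant_along_paths[OF g(1), where \<phi> = "\<lambda>H. finite (snd ` H)"])
       (use chabauty_finite_projection_locally_determined[OF assms(1,2)] in \<open>simp add: chabauty_topspace\<close>)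
  then show False using g(2,3) assms(3) by simp
qed

end
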